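(* Let $r \ge 3$ and $0 \le k \le n$ be integers, and put $m = \lceil \frac{(r-2)k}{r-1} \rceil$. Let $g^{1\text{-}\mathrm{ff}}_r(n,k)$ be the maximum cardinality of a family $\mathcal{F} \subseteq \binom{[n]}{k}$ containing no $1$-focal family of size $r$. Then $$g^{1\text{-}\mathrm{ff}}_r(n,k) \le (r-1)\,\frac{\binom{n}{m}}{\binom{k}{m}}.$$
   Context: $\binom{[n]}{k}$ is the family of all $k$-element subsets of $[n]=\{1,\dots,n\}$; sets are identified with their characteristic vectors in $\{0,1\}^n$. For $b \in \{0,1\}$, a family $x^{(0)}, x^{(1)}, \dots, x^{(r-1)}$ of $r$ distinct vectors in $\{0,1\}^n$ is $b$-focal with focus $x^{(0)}$ if for every coordinate $i \in [n]$ with $x^{(0)}_i = b$, at least $r-2$ of the $r-1$ entries $x^{(1)}_i, \dots, x^{(r-1)}_i$ are equal to $b$. A family contains a $b$-focal family of size $r$ if some $r$ distinct members, with some choice of focus among them, form a $b$-focal family. *)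

theory Defs
  imports Complex_Main
begin

text \<open>Sets A \<subseteq> {1..n} are identified with their characteristic vectors in {0,1}^n.
  A family of r distinct vectors x0, x1, ..., x(r-1) with focus x0 is represented by the
  focus A = x0 and the set B = {x1, ..., x(r-1)} of the other r-1 (distinct, different from A)
  members. It is b-focal for b = 1 iff for every coordinate i with i in A, at least r-2 of the
  r-1 sets in B contain i, i.e. at most one set in B misses i.\<close>

definition one_focal :: "nat set \<Rightarrow> nat set set \<Rightarrow> bool" where
  "one_focal A B \<longleftrightarrow> (\<forall>i\<in>A. card {S \<in> B. i \<notin> S} \<le> 1)"

definition contains_1_focal :: "nat \<Rightarrow> nat set set \<Rightarrow> bool" where
  "contains_1_focal r F \<longleftrightarrow>
     (\<exists>A B. A \<in> F \<and> B \<subseteq> F \<and> A \<notin> B \<and> finite B \<and> card B = r - 1 \<and> one_focal A B)"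

definition k_subsets :: "nat \<Rightarrow> nat \<Rightarrow> nat set set" where
  "k_subsets n k = {S. S \<subseteq> {1..n} \<and> card S = k}"

definition g_1ff :: "nat \<Rightarrow> nat \<Rightarrow> nat \<Rightarrow> nat" where
  "g_1ff r n k = Max {card F | F. F \<subseteq> k_subsets n k \<and> \<not> contains_1_focal r F}"

end

theory Submission
  imports Defs "HOL-Combinatorics.Permutations"
begin

text \<open>Call an m-subset T of a member A of F own if no other member of F contains T. A set is
  own for at most one member, so |F| times the least number of own m-subsets of a member is at
  most C(n,m). Put s = k - m = k div (r - 1). Among any r - 1 pairwise disjoint s-subsets U_j of
  A, some A - U_j is own: otherwise there are members B_j \<noteq> A with A - U_j \<subseteq> B_j;
  they are pairwise distinct, since B_i = B_j would contain A, and a point x of A is missed only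
  by the B_j with x \<in> U_j, so A and the B_j form a 1-focal family of size r. Averaging over
  all ordered lists of r - 1 pairwise disjoint s-subsets of A, in which every position carries
  every s-subset equally often, A has at least C(k,s)/(r - 1) own m-subsets.\<close>

definition packings :: "'a set \<Rightarrow> nat \<Rightarrow> nat \<Rightarrow> 'a set list set" where
  "packings X s t = {L. length L = t \<and> (\<forall>i<t. L!i \<subseteq> X \<and> card (L!i) = s) \<and>
     (\<forall>i<t. \<forall>j<t. i \<noteq> j \<longrightarrow> L!i \<inter> L!j = {})}"

lemma Cons_in_packings_iff:
  "U # L \<in> packings X s (Suc t) \<longleftrightarrow> U \<subseteq> X \<and> card U = s \<and> L \<in> packings (X - U) s t"
  unfolding packings_def All_less_Suc2 by (auto; blast)

lemma packings_Suc:
  "packings X s (Suc t) = (\<Union>U\<in>{U. U \<subseteq> X \<and> card U = s}. (#) U ` packings (X - U) s t)"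
proof (intro equalityI subsetI)
  fix L assume "L \<in> packings X s (Suc t)"
  moreover from this obtain U L' where "L = U # L'"
    by (auto simp: packings_def length_Suc_conv)
  ultimately show "L \<in> (\<Union>U\<in>{U. U \<subseteq> X \<and> card U = s}. (#) U ` packings (X - U) s t)"
    by (auto simp: Cons_in_packings_iff)
qed (auto simp: Cons_in_packings_iff)

lemma finite_packings: "finite X \<Longrightarrow> finite (packings X s t)"
proof (induction t arbitrary: X)
  case 0
  then show ?case by (simp add: packings_def)
next
  case (Suc t)
  then show ?case by (simp add: packings_Suc)
qed

lemma permute_list_in_packings:
  assumes p: "p permutes {..<t}" and L: "L \<in> packings X s t"
  shows "permute_list p L \<in> packings X s t"
proof -
  have len: "length L = t" using L by (simp add: packings_def)
  have image: "i < t \<Longrightarrow> p i < t" for i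
    using permutes_in_image[OF p] by simp
  have inj: "p i = p j \<Longrightarrow> i = j" for i j
    using permutes_inj[OF p] by (simp add: inj_eq)
  have nth: "permute_list p L ! i = L ! p i" if "i < t" for i
    using p that len by (simp add: permute_list_nth)
  show ?thesis
    using L len image inj unfolding packings_def by (simp add: nth) metis
qed

lemma card_packings_nth_in:
  assumes "j < t"
  shows "card {L \<in> packings X s t. L!j \<in> G} = card {L \<in> packings X s t. L!0 \<in> G}"
proof -
  let ?\<tau> = "Transposition.transpose 0 j"
  have perm: "?\<tau> permutes {..<t}" using assms by (simp add: permutes_swap_id)
  have involution: "permute_list ?\<tau> (permute_list ?\<tau> L) = L" if "L \<in> packings X s t" for L
    using that permute_list_compose[of ?\<tau> L ?\<tau>] perm by (simp add: packings_def)
  have nth: "permute_list ?\<tau> L ! i = L ! ?\<tau> i" if "L \<in> packings X s t" "i < t" for L i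
    using that perm by (simp add: packings_def permute_list_nth)
  have "bij_betw (permute_list ?\<tau>) {L \<in> packings X s t. L!j \<in> G} {L \<in> packings X s t. L!0 \<in> G}"
  proof (rule bij_betw_byWitness[where f' = "permute_list ?\<tau>"])
    show "permute_list ?\<tau> ` {L \<in> packings X s t. L!j \<in> G} \<subseteq> {L \<in> packings X s t. L!0 \<in> G}"
      using assms by (auto simp: nth permute_list_in_packings[OF perm])
    show "permute_list ?\<tau> ` {L \<in> packings X s t. L!0 \<in> G} \<subseteq> {L \<in> packings X s t. L!j \<in> G}"
      using assms by (auto simp: nth permute_list_in_packings[OF perm])
  qed (simp_all add: involution)
  then show ?thesis by (rule bij_betw_same_card)
qed

lemma card_packings_Suc_nth0_in:
  assumes "finite X" "G \<subseteq> {U. U \<subseteq> X \<and> card U = s}"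
  shows "card {L \<in> packings X s (Suc t). L!0 \<in> G} = (\<Sum>U\<in>G. card (packings (X - U) s t))"
proof -
  have "finite G"
    by (rule finite_subset[of _ "Pow X"]) (use assms in auto)
  have "{L \<in> packings X s (Suc t). L!0 \<in> G} = (\<Union>U\<in>G. (#) U ` packings (X - U) s t)"
    using assms(2) by (auto simp: packings_Suc)
  also have "card \<dots> = (\<Sum>U\<in>G. card ((#) U ` packings (X - U) s t))"
    using \<open>finite G\<close> \<open>finite X\<close> by (intro card_UN_disjoint) (auto simp: finite_packings)
  also have "\<dots> = (\<Sum>U\<in>G. card (packings (X - U) s t))"
    by (simp add: card_image)
  finally show ?thesis .
qed

fun packing_count :: "nat \<Rightarrow> nat \<Rightarrow> nat \<Rightarrow> nat" where
  "packing_count x s 0 = 1"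
| "packing_count x s (Suc t) = (x choose s) * packing_count (x - s) s t"

lemma packing_count_pos: "t * s \<le> x \<Longrightarrow> packing_count x s t > 0"
  by (induction t arbitrary: x) auto

lemma card_packings: "finite X \<Longrightarrow> card (packings X s t) = packing_count (card X) s t"
proof (induction t arbitrary: X)
  case 0
  have "packings X s 0 = {[]}" by (auto simp: packings_def)
  then show ?case by simp
next
  case (Suc t)
  let ?subsets = "{U. U \<subseteq> X \<and> card U = s}"
  have "packings X s (Suc t) = {L \<in> packings X s (Suc t). L!0 \<in> ?subsets}"
    by (auto simp: packings_def)
  also have "card \<dots> = (\<Sum>U\<in>?subsets. card (packings (X - U) s t))"
    using Suc.prems by (rule card_packings_Suc_nth0_in) simp
  also have "\<dots> = (\<Sum>U\<in>?subsets. packing_count (card X - s) s t)"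
    using Suc by (intro sum.cong) (auto simp: card_Diff_subset finite_subset)
  also have "\<dots> = packing_count (card X) s (Suc t)"
    using n_subsets[OF Suc.prems] by simp
  finally show ?case .
qed

lemma binomial_le_mult_card_if_meets_all_packings:
  assumes X: "finite X" and G: "G \<subseteq> {U. U \<subseteq> X \<and> card U = s}"
    and "0 < t" and room: "t * s \<le> card X"
    and meets: "\<And>L. L \<in> packings X s t \<Longrightarrow> \<exists>j<t. L!j \<in> G"
  shows "card X choose s \<le> t * card G"
proof -
  obtain t' where t: "t = Suc t'" using \<open>0 < t\<close> gr0_implies_Suc by blast
  define c where "c = packing_count (card X - s) s t'"
  have "c > 0" unfolding c_def using room t by (intro packing_count_pos) simp
  have first_in: "card {L \<in> packings X s t. L!0 \<in> G} = card G * c"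
  proof -
    have "card {L \<in> packings X s t. L!0 \<in> G} = (\<Sum>U\<in>G. card (packings (X - U) s t'))"
      unfolding t using X G by (rule card_packings_Suc_nth0_in)
    also have "\<dots> = (\<Sum>U\<in>G. c)"
      using G X by (intro sum.cong) (auto simp: c_def card_packings card_Diff_subset finite_subset)
    finally show ?thesis by simp
  qed
  have cover: "packings X s t = (\<Union>j<t. {L \<in> packings X s t. L!j \<in> G})"
    using meets by auto
  have "(card X choose s) * c = card (packings X s t)"
    by (simp add: card_packings X t c_def)
  also have "\<dots> = card (\<Union>j<t. {L \<in> packings X s t. L!j \<in> G})"
    using cover by simp
  also have "\<dots> \<le> (\<Sum>j<t. card {L \<in> packings X s t. L!j \<in> G})"
    by (rule card_UN_le) simp
  also have "\<dots> = (\<Sum>j<t. card G * c)"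
  proof (rule sum.cong[OF refl])
    fix j assume "j \<in> {..<t}"
    then have "card {L \<in> packings X s t. L!j \<in> G} = card {L \<in> packings X s t. L!0 \<in> G}"
      by (intro card_packings_nth_in) simp
    then show "card {L \<in> packings X s t. L!j \<in> G} = card G * c"
      using first_in by simp
  qed
  finally have "(card X choose s) * c \<le> (t * card G) * c" by simp
  then show ?thesis using \<open>c > 0\<close> by simp
qed

definition own_sets :: "'a set set \<Rightarrow> 'a set \<Rightarrow> 'a set set" where
  "own_sets F A = {T. T \<subseteq> A \<and> (\<forall>B\<in>F. T \<subseteq> B \<longrightarrow> B = A)}"

lemma own_sets_disjoint:
  assumes "A' \<in> F" "A \<noteq> A'"
  shows "own_sets F A \<inter> own_sets F A' = {}"
  using assms by (auto simp: own_sets_def)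

lemma contains_1_focal_if_packing_avoids_own_sets:
  assumes uniform: "\<And>B. B \<in> F \<Longrightarrow> finite B \<and> card B = card A" and "A \<in> F"
    and L: "L \<in> packings A s (r - 1)"
    and avoids: "\<And>j. j < r - 1 \<Longrightarrow> A - L!j \<notin> own_sets F A"
  shows "contains_1_focal r F"
proof -
  have "\<exists>B\<in>F. A - L!j \<subseteq> B \<and> B \<noteq> A" if "j < r - 1" for j
    using avoids[OF that] by (auto simp: own_sets_def)
  then obtain B where B: "\<And>j. j < r - 1 \<Longrightarrow> B j \<in> F \<and> A - L!j \<subseteq> B j \<and> B j \<noteq> A"
    by metis
  have disjoint: "L!i \<inter> L!j = {}" if "i < r - 1" "j < r - 1" "i \<noteq> j" for i j
    using L that by (simp add: packings_def)
  have "inj_on B {..<r - 1}"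
  proof (rule inj_onI, rule ccontr)
    fix i j assume ij: "i \<in> {..<r - 1}" "j \<in> {..<r - 1}" "B i = B j" "i \<noteq> j"
    then have "A \<subseteq> B i" using B[of i] B[of j] disjoint[of i j] by auto
    then have "B i = A"
      using uniform[of "B i"] B[of i] ij by (metis card_subset_eq lessThan_iff)
    then show False using B[of i] ij by simp
  qed
  then have card_B: "card (B ` {..<r - 1}) = r - 1" by (simp add: card_image)
  have "one_focal A (B ` {..<r - 1})"
    unfolding one_focal_def
  proof
    fix x assume "x \<in> A"
    then have "x \<in> L!j" if "j < r - 1" "x \<notin> B j" for j
      using B[OF that(1)] that(2) by auto
    then have "i = j" if "i < r - 1" "j < r - 1" "x \<notin> B i" "x \<notin> B j" for i j
      using disjoint that by blast
    then have "\<forall>S\<in>{S \<in> B ` {..<r - 1}. x \<notin> S}. \<forall>S'\<in>{S \<in> B ` {..<r - 1}. x \<notin> S}. S = S'"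
      by auto
    then show "card {S \<in> B ` {..<r - 1}. x \<notin> S} \<le> 1"
      unfolding One_nat_def by (subst card_le_Suc0_iff_eq) auto
  qed
  then show ?thesis
    unfolding contains_1_focal_def using \<open>A \<in> F\<close> B card_B
    by (intro exI[of _ A] exI[of _ "B ` {..<r - 1}"]) auto
qed

lemma binomial_le_mult_card_own_sets:
  assumes uniform: "\<And>B. B \<in> F \<Longrightarrow> finite B \<and> card B = card A" and A: "A \<in> F"
    and no_focal: "\<not> contains_1_focal r F" and "2 \<le> r" and room: "(r - 1) * s \<le> card A"
  shows "card A choose s \<le> (r - 1) * card {T \<in> own_sets F A. card T = card A - s}"
proof -
  define G where "G = {U. U \<subseteq> A \<and> card U = s \<and> A - U \<in> own_sets F A}"
  have "finite A" using uniform A by blast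
  have "s \<le> card A" using room \<open>2 \<le> r\<close> mult_le_mono1[of 1 "r - 1" s] by linarith
  have "card A choose s \<le> (r - 1) * card G"
  proof (rule binomial_le_mult_card_if_meets_all_packings)
    fix L assume L: "L \<in> packings A s (r - 1)"
    show "\<exists>j<r - 1. L!j \<in> G"
    proof (rule ccontr)
      assume "\<not> (\<exists>j<r - 1. L!j \<in> G)"
      then have "A - L!j \<notin> own_sets F A" if "j < r - 1" for j
        using L that by (auto simp: G_def packings_def)
      then show False
        using contains_1_focal_if_packing_avoids_own_sets[OF uniform A L] no_focal by blast
    qed
  qed (use \<open>finite A\<close> \<open>2 \<le> r\<close> room in \<open>auto simp: G_def\<close>)
  also have "card G = card {T \<in> own_sets F A. card T = card A - s}"
  proof (rule bij_betw_same_card, rule bij_betw_byWitness[where f' = "\<lambda>T. A - T"])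
    show "(\<lambda>U. A - U) ` G \<subseteq> {T \<in> own_sets F A. card T = card A - s}"
      using \<open>finite A\<close> by (auto simp: G_def card_Diff_subset finite_subset)
    show "(\<lambda>T. A - T) ` {T \<in> own_sets F A. card T = card A - s} \<subseteq> G"
      using \<open>finite A\<close> \<open>s \<le> card A\<close>
      by (auto simp: G_def own_sets_def card_Diff_subset finite_subset double_diff)
  qed (auto simp: G_def own_sets_def)
  finally show ?thesis .
qed

lemma finite_k_subsets: "finite (k_subsets n k)"
  by (rule finite_subset[of _ "Pow {1..n}"]) (auto simp: k_subsets_def)

lemma card_k_subsets: "card (k_subsets n k) = n choose k"
  using n_subsets[of "{1..n}" k] by (simp add: k_subsets_def)

lemma card_mult_binomial_le_if_no_1_focal:
  assumes "2 \<le> r" and F: "F \<subseteq> k_subsets n k" and no_focal: "\<not> contains_1_focal r F"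
  defines "m \<equiv> k - k div (r - 1)"
  shows "card F * (k choose m) \<le> (r - 1) * (n choose m)"
proof -
  define s where "s = k div (r - 1)"
  define Own where "Own A = {T \<in> own_sets F A. card T = m}" for A
  have members: "B \<subseteq> {1..n} \<and> card B = k" if "B \<in> F" for B
    using F that by (auto simp: k_subsets_def)
  then have uniform: "finite B \<and> card B = card A" if "A \<in> F" "B \<in> F" for A B
    using that by (metis finite_atLeastAtMost finite_subset)
  have "finite F" using F finite_k_subsets by (rule finite_subset)
  have Own_subset: "Own A \<subseteq> k_subsets n m" if "A \<in> F" for A
    using members[OF that] by (auto simp: Own_def own_sets_def k_subsets_def)
  have "k choose m = k choose s"
    unfolding m_def s_def by (rule binomial_symmetric[symmetric]) simp
  then have "card F * (k choose m) = (\<Sum>A\<in>F. k choose s)" by simp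
  also have "\<dots> \<le> (\<Sum>A\<in>F. (r - 1) * card (Own A))"
  proof (rule sum_mono)
    fix A assume "A \<in> F"
    have "(r - 1) * s \<le> card A"
      using members[OF \<open>A \<in> F\<close>] by (simp add: s_def div_times_less_eq_dividend mult.commute)
    then show "k choose s \<le> (r - 1) * card (Own A)"
      using binomial_le_mult_card_own_sets[OF uniform[OF \<open>A \<in> F\<close>] \<open>A \<in> F\<close> no_focal \<open>2 \<le> r\<close>]
        members[OF \<open>A \<in> F\<close>] by (simp add: Own_def m_def s_def)
  qed
  also have "\<dots> = (r - 1) * card (\<Union>A\<in>F. Own A)"
  proof -
    have "Own A \<inter> Own A' = {}" if "A' \<in> F" "A \<noteq> A'" for A A'
      using own_sets_disjoint[OF that] by (auto simp: Own_def)
    moreover have "finite (Own A)" if "A \<in> F" for A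
      using Own_subset[OF that] finite_k_subsets by (rule finite_subset)
    ultimately have "card (\<Union>A\<in>F. Own A) = (\<Sum>A\<in>F. card (Own A))"
      using \<open>finite F\<close> by (intro card_UN_disjoint) auto
    then show ?thesis by (simp add: sum_distrib_left)
  qed
  also have "\<dots> \<le> (r - 1) * (n choose m)"
    using Own_subset card_mono[OF finite_k_subsets] by (simp add: card_k_subsets UN_least)
  finally show ?thesis .
qed

lemma g_1ff_attained:
  "\<exists>F. F \<subseteq> k_subsets n k \<and> \<not> contains_1_focal r F \<and> card F = g_1ff r n k"
proof -
  let ?sizes = "{card F | F. F \<subseteq> k_subsets n k \<and> \<not> contains_1_focal r F}"
  have "?sizes \<subseteq> card ` Pow (k_subsets n k)" by auto
  then have "finite ?sizes" using finite_k_subsets by (meson finite_Pow_iff finite_imageI finite_subset)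
  moreover have "card ({} :: nat set set) \<in> ?sizes"
    by (intro CollectI exI[of _ "{}"]) (simp add: contains_1_focal_def)
  ultimately have "Max ?sizes \<in> ?sizes" by (intro Max_in) auto
  then show ?thesis by (auto simp: g_1ff_def)
qed

lemma nat_ceiling_pred_mult_div:
  assumes "d > 0"
  shows "nat \<lceil>real ((d - 1) * k) / real d\<rceil> = k - k div d"
proof -
  have quotient: "real ((d - 1) * k) / real d = - (real k / real d) + of_int (int k)"
    using assms by (simp add: of_nat_diff field_simps)
  have "\<lceil>- (real k / real d) + of_int (int k)\<rceil> = int k - int (k div d)"
    unfolding ceiling_add_of_int ceiling_minus floor_divide_of_nat_eq by simp
  then show ?thesis unfolding quotient by simp
qed

theorem theorem5p2:
  fixes r n k :: nat
  assumes "r \<ge> 3" and "k \<le> n"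
  defines "m \<equiv> nat \<lceil>real ((r - 2) * k) / real (r - 1)\<rceil>"
  shows "real (g_1ff r n k) \<le> real (r - 1) * real (n choose m) / real (k choose m)"
proof -
  obtain F where F: "F \<subseteq> k_subsets n k" "\<not> contains_1_focal r F" and g: "card F = g_1ff r n k"
    using g_1ff_attained by blast
  have m: "m = k - k div (r - 1)"
    using nat_ceiling_pred_mult_div[of "r - 1" k] \<open>r \<ge> 3\<close> unfolding m_def by (simp add: numeral_2_eq_2)
  have "card F * (k choose m) \<le> (r - 1) * (n choose m)"
    unfolding m using \<open>r \<ge> 3\<close> F by (intro card_mult_binomial_le_if_no_1_focal) simp_all
  then have "real (card F) * real (k choose m) \<le> real (r - 1) * real (n choose m)"
    by (metis of_nat_le_iff of_nat_mult)
  moreover have "k choose m > 0" unfolding m by simp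
  ultimately show ?thesis by (simp add: g[symmetric] pos_le_divide_eq)
qed

end
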